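(* Let $S_1,\ldots,S_m$ be propositional formulae. The lexicographic orders $[S_1,\ldots,S_{m-1},S_m]$ and $[S_1,\ldots,S_{m-1}]$ are equivalent if and only if either $Q \models S_m$ or $Q \models \neg S_m$ holds for every formula $Q = (B_1 \equiv S_1) \wedge \cdots \wedge (B_{m-1} \equiv S_{m-1})$, where each $B_i$ is either $\top$ or $\bot$.
   Context: Models are truth assignments. For a formula $F$: $I \leq_F J$ iff $I \models F$ or $J \not\models F$. For a sequence $S=[S_1,\ldots,S_m]$: $I \leq_S J$ iff either $S=[]$, or ($I \leq_{S_1} J$ and (either $J \not\leq_{S_1} I$ or $I \leq_R J$)), where $R=[S_2,\ldots,S_m]$. Two sequences $S$ and $R$ are equivalent if $I \leq_S J$ and $I\leq_R J$ coincide for all pairs of models $I,J$. *)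

theory Defs
  imports Main
begin

datatype 'v form = Top | Bot | Var 'v | Neg "'v form" | And "'v form" "'v form"
  | Or "'v form" "'v form" | Imp "'v form" "'v form" | Iff "'v form" "'v form"

type_synonym 'v model = "'v \<Rightarrow> bool"

fun sat :: "'v model \<Rightarrow> 'v form \<Rightarrow> bool" (infix "\<Turnstile>" 50) where
  "sat I Top = True"
| "sat I Bot = False"
| "sat I (Var x) = I x"
| "sat I (Neg F) = (\<not> sat I F)"
| "sat I (And F G) = (sat I F \<and> sat I G)"
| "sat I (Or F G) = (sat I F \<or> sat I G)"
| "sat I (Imp F G) = (sat I F \<longrightarrow> sat I G)"
| "sat I (Iff F G) = (sat I F \<longleftrightarrow> sat I G)"

definition entails :: "'v form \<Rightarrow> 'v form \<Rightarrow> bool" where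
  "entails Q F \<longleftrightarrow> (\<forall>I. sat I Q \<longrightarrow> sat I F)"

definition le_form :: "'v form \<Rightarrow> 'v model \<Rightarrow> 'v model \<Rightarrow> bool" where
  "le_form F I J \<longleftrightarrow> (sat I F \<or> \<not> sat J F)"

fun le_seq :: "'v form list \<Rightarrow> 'v model \<Rightarrow> 'v model \<Rightarrow> bool" where
  "le_seq [] I J = True"
| "le_seq (S1 # R) I J = (le_form S1 I J \<and> (\<not> le_form S1 J I \<or> le_seq R I J))"

definition seq_equiv :: "'v form list \<Rightarrow> 'v form list \<Rightarrow> bool" where
  "seq_equiv S R \<longleftrightarrow> (\<forall>I J. le_seq S I J = le_seq R I J)"

fun bconj :: "bool list \<Rightarrow> 'v form list \<Rightarrow> 'v form" where
  "bconj (b # bs) (S # Ss) = And (Iff (if b then Top else Bot) S) (bconj bs Ss)"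
| "bconj _ _ = Top"

end

theory Submission
  imports Defs
begin

text \<open>Appending \<open>S\<^sub>m\<close> changes the order only between models that agree on all the
  earlier formulas: the shorter sequence makes them equivalent, the longer one compares them
  by \<open>S\<^sub>m\<close>. So the orders coincide iff the truth value of \<open>S\<^sub>m\<close> is a function of the
  truth values of the earlier formulas. The models of \<open>Q\<close> are exactly the models realising
  the vector of truth values \<open>B\<close>, so \<open>Q\<close> decides \<open>S\<^sub>m\<close> for every \<open>B\<close> iff it is such a
  function.\<close>

lemma sat_bconj_iff:
  assumes "length B = length S"
  shows "I \<Turnstile> bconj B S \<longleftrightarrow> map (sat I) S = B"
  using assms
proof (induction B arbitrary: S)
  case (Cons b B S)
  then obtain s S' where "S = s # S'" by (cases S) auto
  with Cons show ?case by auto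
qed simp

lemma le_seq_if_agree:
  "map (sat I) S = map (sat J) S \<Longrightarrow> le_seq S I J"
  by (induction S) (auto simp: le_form_def)

lemma le_seq_snoc:
  "le_seq (S @ [F]) I J \<longleftrightarrow>
     le_seq S I J \<and> (map (sat I) S = map (sat J) S \<longrightarrow> le_form F I J)"
  by (induction S) (auto simp: le_form_def)

lemma seq_equiv_snoc_iff:
  "seq_equiv (S @ [F]) S \<longleftrightarrow>
     (\<forall>I J. map (sat I) S = map (sat J) S \<longrightarrow> (I \<Turnstile> F \<longleftrightarrow> J \<Turnstile> F))"
proof
  assume "seq_equiv (S @ [F]) S"
  then have "le_form F I J" if "map (sat I) S = map (sat J) S" for I J
    using that le_seq_if_agree by (metis seq_equiv_def le_seq_snoc)
  then show "\<forall>I J. map (sat I) S = map (sat J) S \<longrightarrow> (I \<Turnstile> F \<longleftrightarrow> J \<Turnstile> F)"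
    by (metis le_form_def)
qed (auto simp: seq_equiv_def le_seq_snoc le_form_def)

lemma bconj_decides_iff:
  "(\<forall>B. length B = length S \<longrightarrow> entails (bconj B S) F \<or> entails (bconj B S) (Neg F)) \<longleftrightarrow>
     (\<forall>I J. map (sat I) S = map (sat J) S \<longrightarrow> (I \<Turnstile> F \<longleftrightarrow> J \<Turnstile> F))"
proof
  assume decides: "\<forall>B. length B = length S \<longrightarrow>
    entails (bconj B S) F \<or> entails (bconj B S) (Neg F)"
  show "\<forall>I J. map (sat I) S = map (sat J) S \<longrightarrow> (I \<Turnstile> F \<longleftrightarrow> J \<Turnstile> F)"
  proof (intro allI impI)
    fix I J assume agree: "map (sat I) S = map (sat J) S"
    have "I \<Turnstile> bconj (map (sat J) S) S" "J \<Turnstile> bconj (map (sat J) S) S"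
      using agree by (simp_all add: sat_bconj_iff)
    then show "I \<Turnstile> F \<longleftrightarrow> J \<Turnstile> F"
      using decides[rule_format, of "map (sat J) S"] by (auto simp: entails_def)
  qed
next
  assume "\<forall>I J. map (sat I) S = map (sat J) S \<longrightarrow> (I \<Turnstile> F \<longleftrightarrow> J \<Turnstile> F)"
  then show "\<forall>B. length B = length S \<longrightarrow> entails (bconj B S) F \<or> entails (bconj B S) (Neg F)"
    unfolding entails_def by (metis sat.simps(4) sat_bconj_iff)
qed

theorem theorem2:
  fixes S :: "'v form list" and Sm :: "'v form"
  shows "seq_equiv (S @ [Sm]) S \<longleftrightarrow>
    (\<forall>B :: bool list. length B = length S \<longrightarrow>
       entails (bconj B S) Sm \<or> entails (bconj B S) (Neg Sm))"
  by (simp only: seq_equiv_snoc_iff bconj_decides_iff)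

end
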